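(* Assume $\mathrm{char}(\Bbbk)\ne2$. The set $\{M_\alpha\}_{\alpha\text{ even}}$ is a linear basis for the even subalgebra $\Pi_+$ of $(\mathcal{Q}\mathit{Sym},\zeta_{\mathcal Q})$.
   Context: $\mathcal{Q}\mathit{Sym}$ is the graded Hopf algebra of quasi-symmetric functions over $\Bbbk$ with basis $M_\alpha=\sum_{i_1<\cdots<i_k}x_{i_1}^{a_1}\cdots x_{i_k}^{a_k}$ for compositions $\alpha=(a_1,\dots,a_k)$ (degree $a_1+\cdots+a_k$; $M_{()}=1$), coproduct $\Delta(M_\alpha)=\sum_{\alpha=\beta\gamma}M_\beta\otimes M_\gamma$. $\zeta_{\mathcal Q}$ is the character with $\zeta_{\mathcal Q}(M_\alpha)=1$ if $\alpha=(n)$ or $()$, $0$ otherwise. $\bar\zeta_{\mathcal Q}(h)=(-1)^n\zeta_{\mathcal Q}(h)$ for $h$ of degree $n$. $\Pi_+$ is the largest graded subcoalgebra of $\mathcal{Q}\mathit{Sym}$ on which $\bar\zeta_{\mathcal Q}=\zeta_{\mathcal Q}$. A composition is even if all its parts are even (the empty composition counts as even). *)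

theory Defs
  imports Complex_Main "HOL-Library.Function_Algebras"
begin

text \<open>An element of QSym over the field 'a
  is represented by its coefficient function with respect to the monomial basis M.
  Elements of QSym (x) QSym are coefficient functions on pairs of compositions
  (w.r.t. the basis M_beta (x) M_gamma).\<close>

type_synonym 'a qsym = "nat list \<Rightarrow> 'a"

definition is_comp :: "nat list \<Rightarrow> bool" where
  "is_comp \<alpha> \<longleftrightarrow> (\<forall>a\<in>set \<alpha>. 0 < a)"

definition comp_even :: "nat list \<Rightarrow> bool" where
  "comp_even \<alpha> \<longleftrightarrow> (\<forall>a\<in>set \<alpha>. even a)"

definition QSym :: "'a::field qsym set" where
  "QSym = {f. finite {\<alpha>. f \<alpha> \<noteq> 0} \<and> (\<forall>\<alpha>. f \<alpha> \<noteq> 0 \<longrightarrow> is_comp \<alpha>)}"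

definition scl :: "'a::field \<Rightarrow> ('b \<Rightarrow> 'a) \<Rightarrow> ('b \<Rightarrow> 'a)" where
  "scl c f = (\<lambda>x. c * f x)"

definition Mqs :: "nat list \<Rightarrow> 'a::field qsym" where
  "Mqs \<alpha> = (\<lambda>\<beta>. if \<beta> = \<alpha> then 1 else 0)"

text \<open>coproduct: Delta(M_alpha) = sum over alpha = beta gamma of M_beta (x) M_gamma\<close>
definition Delta :: "'a::field qsym \<Rightarrow> (nat list \<times> nat list \<Rightarrow> 'a)" where
  "Delta f = (\<lambda>(\<beta>, \<gamma>). f (\<beta> @ \<gamma>))"

definition tensor :: "'a::field qsym \<Rightarrow> 'a qsym \<Rightarrow> (nat list \<times> nat list \<Rightarrow> 'a)" where
  "tensor g h = (\<lambda>(\<beta>, \<gamma>). g \<beta> * h \<gamma>)"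

definition homog_part :: "nat \<Rightarrow> 'a::field qsym \<Rightarrow> 'a qsym" where
  "homog_part n f = (\<lambda>\<alpha>. if sum_list \<alpha> = n then f \<alpha> else 0)"

definition zetaQ :: "'a::field qsym \<Rightarrow> 'a" where
  "zetaQ f = (\<Sum>\<alpha>\<in>{\<alpha>. f \<alpha> \<noteq> 0 \<and> length \<alpha> \<le> 1}. f \<alpha>)"

text \<open>bar zeta(h) = (-1)^n zeta(h) for h homogeneous of degree n; extended linearly\<close>
definition zetabarQ :: "'a::field qsym \<Rightarrow> 'a" where
  "zetabarQ f = (\<Sum>\<alpha>\<in>{\<alpha>. f \<alpha> \<noteq> 0 \<and> length \<alpha> \<le> 1}. (-1) ^ sum_list \<alpha> * f \<alpha>)"

definition graded_subcoalgebra :: "'a::field qsym set \<Rightarrow> bool" where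
  "graded_subcoalgebra C \<longleftrightarrow>
     C \<subseteq> QSym \<and> module.subspace scl C \<and>
     (\<forall>f\<in>C. Delta f \<in> module.span scl ((\<lambda>(g, h). tensor g h) ` (C \<times> C))) \<and>
     (\<forall>f\<in>C. \<forall>n. homog_part n f \<in> C)"

definition even_subcoalg_cond :: "'a::field qsym set \<Rightarrow> bool" where
  "even_subcoalg_cond C \<longleftrightarrow> graded_subcoalgebra C \<and> (\<forall>f\<in>C. zetabarQ f = zetaQ f)"

definition Pi_plus :: "'a::field qsym set" where
  "Pi_plus = (THE C. even_subcoalg_cond C \<and> (\<forall>D. even_subcoalg_cond D \<longrightarrow> D \<subseteq> C))"

end

theory Submission
  imports Defs
begin

(* Let E be the space of quasi-symmetric functions supported on even compositions; it is the
   span of the even M_alpha, and these are independent. Deconcatenation preserves evenness,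
   so E is a graded subcoalgebra, and zeta and bar zeta agree on E because they only see
   one-part compositions, here of even degree. Conversely, let D be any graded subcoalgebra
   on which bar zeta = zeta. For odd n the degree-n component g of f in D satisfies
   bar zeta g = - zeta g, so the coefficient of M_(n) in f vanishes (char k <> 2). If f has
   a nonzero coefficient at a.gamma, then so does Delta f at ((a), gamma), which forces
   elements of D with nonzero coefficients at (a) and at gamma; induction on the length
   shows that every composition in the support of D is even. *)

lemma module_scl: "module (scl :: 'a::field \<Rightarrow> ('b \<Rightarrow> 'a) \<Rightarrow> _)"
  by unfold_locales (auto simp: scl_def fun_eq_iff algebra_simps)

lemma scl_apply [simp]: "scl c f x = c * f x"
  by (simp add: scl_def)

lemma sum_fun_apply: "sum f A x = (\<Sum>a\<in>A. f a x)"
  by (induct A rule: infinite_finite_induct) auto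

definition point_fun :: "'b \<Rightarrow> 'b \<Rightarrow> 'a::field" where
  "point_fun x = (\<lambda>y. if y = x then 1 else 0)"

lemma point_fun_eq_iff [simp]: "point_fun x = (point_fun y :: 'b \<Rightarrow> 'a::field) \<longleftrightarrow> x = y"
  by (auto simp: point_fun_def fun_eq_iff)

lemma point_fun_apply: "point_fun x y = (if y = x then 1 else 0)"
  by (simp add: point_fun_def)

lemma Mqs_eq_point_fun: "Mqs = point_fun"
  by (simp add: fun_eq_iff Mqs_def point_fun_def)

lemma tensor_point_fun: "tensor (point_fun \<beta>) (point_fun \<gamma>) = point_fun (\<beta>, \<gamma>)"
  by (simp add: fun_eq_iff tensor_def point_fun_def)

lemma finite_support_eq_sum_point_fun:
  fixes f :: "'b \<Rightarrow> 'a::field"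
  assumes "finite {x. f x \<noteq> 0}"
  shows "f = (\<Sum>x | f x \<noteq> 0. scl (f x) (point_fun x))"
proof
  fix y
  have "(\<Sum>x | f x \<noteq> 0. scl (f x) (point_fun x)) y = (\<Sum>x | f x \<noteq> 0. if x = y then f x else 0)"
    unfolding sum_fun_apply by (rule sum.cong) (auto simp: point_fun_def)
  also have "\<dots> = f y"
    using assms by (simp add: sum.delta')
  finally show "f y = (\<Sum>x | f x \<noteq> 0. scl (f x) (point_fun x)) y" by simp
qed

lemma finite_support_in_span:
  fixes f :: "'b \<Rightarrow> 'a::field"
  assumes "finite {x. f x \<noteq> 0}"
    and "\<And>x. f x \<noteq> 0 \<Longrightarrow> point_fun x \<in> module.span scl B"
  shows "f \<in> module.span scl B"
proof -
  interpret module "scl :: 'a \<Rightarrow> ('b \<Rightarrow> 'a) \<Rightarrow> _" by (rule module_scl)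
  have "f = (\<Sum>x | f x \<noteq> 0. scl (f x) (point_fun x))"
    using assms(1) by (rule finite_support_eq_sum_point_fun)
  also have "\<dots> \<in> span B"
    using assms(2) by (intro span_sum span_scale) simp
  finally show ?thesis .
qed

lemma independent_point_funs:
  "\<not> module.dependent scl (point_fun ` A :: ('b \<Rightarrow> 'a::field) set)"
proof -
  interpret module "scl :: 'a \<Rightarrow> ('b \<Rightarrow> 'a) \<Rightarrow> _" by (rule module_scl)
  show ?thesis
  proof (unfold dependent_explicit, clarify)
    fix t u v
    assume t: "finite t" "t \<subseteq> point_fun ` A" and zero: "(\<Sum>w\<in>t. scl (u w) w) = 0"
      and v: "v \<in> t" "u v \<noteq> 0"
    obtain x where x: "v = point_fun x" using v t by auto
    have "(\<Sum>w\<in>t. scl (u w) w) x = (\<Sum>w\<in>t. if w = v then u w else 0)"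
      unfolding sum_fun_apply scl_apply
    proof (rule sum.cong [OF refl])
      fix w assume "w \<in> t"
      then obtain y where "w = point_fun y" using t by auto
      then show "u w * w x = (if w = v then u w else 0)"
        using x by (simp add: point_fun_apply)
    qed
    also have "\<dots> = u v" using t v by (simp add: sum.delta')
    finally show False using zero v by simp
  qed
qed

lemma subspace_vanishing_at: "module.subspace scl {F :: 'b \<Rightarrow> 'a::field. F x = 0}"
proof -
  interpret module "scl :: 'a \<Rightarrow> ('b \<Rightarrow> 'a) \<Rightarrow> _" by (rule module_scl)
  show ?thesis by (auto simp: subspace_def)
qed

definition QSym_even :: "'a::field qsym set" where
  "QSym_even = {f \<in> QSym. \<forall>\<alpha>. f \<alpha> \<noteq> 0 \<longrightarrow> comp_even \<alpha>}"

lemma comp_even_sum_list: "comp_even \<alpha> \<Longrightarrow> even (sum_list \<alpha>)"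
  by (induct \<alpha>) (auto simp: comp_even_def)

lemma subspace_QSym_even: "module.subspace scl (QSym_even :: 'a::field qsym set)"
proof -
  interpret module "scl :: 'a \<Rightarrow> 'a qsym \<Rightarrow> _" by (rule module_scl)
  show ?thesis
  proof (unfold subspace_def, intro conjI ballI allI)
    show "0 \<in> (QSym_even :: 'a qsym set)" by (simp add: QSym_even_def QSym_def)
  next
    fix f g :: "'a qsym" assume "f \<in> QSym_even" "g \<in> QSym_even"
    then show "f + g \<in> QSym_even"
      unfolding QSym_even_def QSym_def
      by (auto intro: finite_subset[of _ "{\<alpha>. f \<alpha> \<noteq> 0} \<union> {\<alpha>. g \<alpha> \<noteq> 0}"];
          metis add.left_neutral add.right_neutral)
  next
    fix c and f :: "'a qsym" assume "f \<in> QSym_even"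
    then show "scl c f \<in> QSym_even"
      unfolding QSym_even_def QSym_def
      by (auto intro: finite_subset[of _ "{\<alpha>. f \<alpha> \<noteq> 0}"])
  qed
qed

lemma Mqs_in_QSym_even: "is_comp \<alpha> \<Longrightarrow> comp_even \<alpha> \<Longrightarrow> (Mqs \<alpha> :: 'a::field qsym) \<in> QSym_even"
  unfolding QSym_even_def QSym_def Mqs_def by auto

lemma span_Mqs_even: "module.span scl (Mqs ` {\<alpha>. is_comp \<alpha> \<and> comp_even \<alpha>}) = (QSym_even :: 'a::field qsym set)"
proof -
  interpret module "scl :: 'a \<Rightarrow> 'a qsym \<Rightarrow> _" by (rule module_scl)
  show ?thesis
  proof
    show "span (Mqs ` {\<alpha>. is_comp \<alpha> \<and> comp_even \<alpha>}) \<subseteq> QSym_even"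
      by (rule span_minimal) (auto intro: Mqs_in_QSym_even subspace_QSym_even)
  next
    show "QSym_even \<subseteq> span (Mqs ` {\<alpha>. is_comp \<alpha> \<and> comp_even \<alpha>})"
    proof
      fix f :: "'a qsym" assume f: "f \<in> QSym_even"
      show "f \<in> span (Mqs ` {\<alpha>. is_comp \<alpha> \<and> comp_even \<alpha>})"
      proof (rule finite_support_in_span)
        show "finite {\<alpha>. f \<alpha> \<noteq> 0}" using f by (simp add: QSym_even_def QSym_def)
      next
        fix \<alpha> assume "f \<alpha> \<noteq> 0"
        then show "point_fun \<alpha> \<in> span (Mqs ` {\<alpha>. is_comp \<alpha> \<and> comp_even \<alpha>})"
          using f by (auto simp: QSym_even_def QSym_def Mqs_eq_point_fun intro: span_base)
      qed
    qed
  qed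
qed

lemma Delta_QSym_even:
  fixes f :: "'a::field qsym"
  assumes f: "f \<in> QSym_even"
  shows "Delta f \<in> module.span scl ((\<lambda>(g, h). tensor g h) ` (QSym_even \<times> QSym_even))"
proof (rule finite_support_in_span)
  have "{p. Delta f p \<noteq> 0} \<subseteq> (\<Union>\<alpha>\<in>{\<alpha>. f \<alpha> \<noteq> 0}. (\<lambda>i. (take i \<alpha>, drop i \<alpha>)) ` {..length \<alpha>})"
  proof
    fix p assume "p \<in> {p. Delta f p \<noteq> 0}"
    then show "p \<in> (\<Union>\<alpha>\<in>{\<alpha>. f \<alpha> \<noteq> 0}. (\<lambda>i. (take i \<alpha>, drop i \<alpha>)) ` {..length \<alpha>})"
      by (cases p) (auto simp: Delta_def intro!: bexI[of _ "fst p @ snd p"] image_eqI[of _ _ "length (fst p)"])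
  qed
  moreover have "finite {\<alpha>. f \<alpha> \<noteq> 0}" using f by (simp add: QSym_even_def QSym_def)
  ultimately show "finite {p. Delta f p \<noteq> 0}" by (blast intro: finite_subset)
next
  fix p assume "Delta f p \<noteq> 0"
  then obtain \<beta> \<gamma> where p: "p = (\<beta>, \<gamma>)" and "f (\<beta> @ \<gamma>) \<noteq> 0" by (cases p) (simp add: Delta_def)
  then have "is_comp (\<beta> @ \<gamma>) \<and> comp_even (\<beta> @ \<gamma>)"
    using f by (auto simp: QSym_even_def QSym_def)
  then have "(point_fun \<beta>, point_fun \<gamma>) \<in> QSym_even \<times> (QSym_even :: 'a qsym set)"
    by (auto intro!: Mqs_in_QSym_even[unfolded Mqs_eq_point_fun] simp: is_comp_def comp_even_def)
  then show "point_fun p \<in> module.span scl ((\<lambda>(g, h). tensor g h) ` (QSym_even \<times> (QSym_even :: 'a qsym set)))"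
    unfolding p tensor_point_fun[symmetric]
    by (intro module.span_base[OF module_scl]) force
qed

lemma even_subcoalg_cond_QSym_even: "even_subcoalg_cond (QSym_even :: 'a::field qsym set)"
  unfolding even_subcoalg_cond_def graded_subcoalgebra_def
proof (intro conjI ballI allI)
  show "QSym_even \<subseteq> (QSym :: 'a qsym set)" by (auto simp: QSym_even_def)
  show "module.subspace scl (QSym_even :: 'a qsym set)" by (rule subspace_QSym_even)
next
  fix f :: "'a qsym" assume "f \<in> QSym_even"
  then show "Delta f \<in> module.span scl ((\<lambda>(g, h). tensor g h) ` (QSym_even \<times> QSym_even))"
    by (rule Delta_QSym_even)
next
  fix f :: "'a qsym" and n assume "f \<in> QSym_even"
  then show "homog_part n f \<in> QSym_even"
    unfolding QSym_even_def QSym_def homog_part_def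
    by (auto intro: finite_subset[of _ "{\<alpha>. f \<alpha> \<noteq> 0}"])
next
  fix f :: "'a qsym" assume "f \<in> QSym_even"
  then show "zetabarQ f = zetaQ f"
    unfolding zetabarQ_def zetaQ_def
    by (intro sum.cong) (auto simp: QSym_even_def dest!: comp_even_sum_list)
qed

lemma short_support_homog_part:
  assumes "0 < n"
  shows "{\<alpha>. homog_part n f \<alpha> \<noteq> 0 \<and> length \<alpha> \<le> 1} \<subseteq> {[n]}"
proof
  fix \<alpha> assume "\<alpha> \<in> {\<alpha>. homog_part n f \<alpha> \<noteq> 0 \<and> length \<alpha> \<le> 1}"
  then have "sum_list \<alpha> = n" "length \<alpha> \<le> 1"
    by (auto simp: homog_part_def split: if_splits)
  with assms show "\<alpha> \<in> {[n]}" by (cases \<alpha>) auto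
qed

lemma zetaQ_homog_part: "0 < n \<Longrightarrow> zetaQ (homog_part n f) = f [n]"
  unfolding zetaQ_def
  by (subst sum.mono_neutral_left[OF _ short_support_homog_part]) (auto simp: homog_part_def)

lemma zetabarQ_homog_part: "0 < n \<Longrightarrow> zetabarQ (homog_part n f) = (-1) ^ n * f [n]"
  unfolding zetabarQ_def
  by (subst sum.mono_neutral_left[OF _ short_support_homog_part]) (auto simp: homog_part_def)

lemma even_subcoalg_cond_single_odd_eq_0:
  assumes two: "(2::'a::field) \<noteq> 0" and D: "even_subcoalg_cond D" and f: "(f :: 'a qsym) \<in> D"
    and n: "odd n"
  shows "f [n] = 0"
proof -
  have "homog_part n f \<in> D"
    using D f by (auto simp: even_subcoalg_cond_def graded_subcoalgebra_def)
  then have "zetabarQ (homog_part n f) = zetaQ (homog_part n f)"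
    using D by (auto simp: even_subcoalg_cond_def)
  then have "- f [n] = f [n]"
    using n by (simp add: zetaQ_homog_part zetabarQ_homog_part odd_pos)
  then have "2 * f [n] = 0" by (simp add: algebra_simps)
  then show ?thesis using two by simp
qed

lemma graded_subcoalgebra_deconcat_witnesses:
  assumes D: "graded_subcoalgebra D" and f: "f \<in> D" and nz: "f (\<beta> @ \<gamma>) \<noteq> 0"
  obtains g h where "g \<in> D" "g \<beta> \<noteq> 0" "h \<in> D" "h \<gamma> \<noteq> 0"
proof -
  interpret module "scl :: 'a \<Rightarrow> (nat list \<times> nat list \<Rightarrow> 'a) \<Rightarrow> _" by (rule module_scl)
  have "\<not> ((\<forall>g\<in>D. g \<beta> = 0) \<or> (\<forall>h\<in>D. h \<gamma> = 0))"
  proof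
    assume "(\<forall>g\<in>D. g \<beta> = 0) \<or> (\<forall>h\<in>D. h \<gamma> = 0)"
    then have "(\<lambda>(g, h). tensor g h) ` (D \<times> D) \<subseteq> {F. F (\<beta>, \<gamma>) = 0}"
      by (auto simp: tensor_def)
    then have "span ((\<lambda>(g, h). tensor g h) ` (D \<times> D)) \<subseteq> {F. F (\<beta>, \<gamma>) = 0}"
      by (rule span_minimal[OF _ subspace_vanishing_at])
    moreover have "Delta f \<in> span ((\<lambda>(g, h). tensor g h) ` (D \<times> D))"
      using D f by (simp add: graded_subcoalgebra_def)
    ultimately have "Delta f (\<beta>, \<gamma>) = 0" by blast
    then show False using nz by (simp add: Delta_def)
  qed
  with that show ?thesis by blast
qed

lemma even_subcoalg_cond_subset_QSym_even:
  assumes two: "(2::'a::field) \<noteq> 0" and D: "even_subcoalg_cond (D :: 'a qsym set)"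
  shows "D \<subseteq> QSym_even"
proof -
  have graded: "graded_subcoalgebra D" and "D \<subseteq> QSym"
    using D by (auto simp: even_subcoalg_cond_def graded_subcoalgebra_def)
  have "\<forall>f\<in>D. f \<alpha> \<noteq> 0 \<longrightarrow> comp_even \<alpha>" for \<alpha>
  proof (induct \<alpha>)
    case Nil
    then show ?case by (simp add: comp_even_def)
  next
    case (Cons a \<gamma>)
    show ?case
    proof (intro ballI impI)
      fix f assume "f \<in> D" "f (a # \<gamma>) \<noteq> 0"
      then obtain g h where "g \<in> D" "g [a] \<noteq> 0" "h \<in> D" "h \<gamma> \<noteq> 0"
        using graded_subcoalgebra_deconcat_witnesses[OF graded, of f "[a]" \<gamma>] by auto
      then have "even a" "comp_even \<gamma>"
        using even_subcoalg_cond_single_odd_eq_0[OF two D] Cons by blast+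
      then show "comp_even (a # \<gamma>)" by (simp add: comp_even_def)
    qed
  qed
  with \<open>D \<subseteq> QSym\<close> show ?thesis by (auto simp: QSym_even_def)
qed

lemma Pi_plus_eqI:
  fixes C :: "'a::field qsym set"
  assumes "even_subcoalg_cond C" and "\<And>D. even_subcoalg_cond D \<Longrightarrow> D \<subseteq> C"
  shows "Pi_plus = C"
  unfolding Pi_plus_def
proof (rule the_equality)
  show "even_subcoalg_cond C \<and> (\<forall>D. even_subcoalg_cond D \<longrightarrow> D \<subseteq> C)"
    using assms by blast
next
  fix C' :: "'a qsym set"
  assume "even_subcoalg_cond C' \<and> (\<forall>D. even_subcoalg_cond D \<longrightarrow> D \<subseteq> C')"
  then show "C' = C" using assms by (meson subset_antisym)
qed

theorem proposition6p3:
  assumes "(2::'a::field) \<noteq> 0"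
  shows "module.span scl (Mqs ` {\<alpha>. is_comp \<alpha> \<and> comp_even \<alpha>}) = (Pi_plus :: 'a qsym set)
       \<and> \<not> module.dependent scl (Mqs ` {\<alpha>. is_comp \<alpha> \<and> comp_even \<alpha>} :: 'a qsym set)"
proof
  have "(Pi_plus :: 'a qsym set) = QSym_even"
    using even_subcoalg_cond_QSym_even even_subcoalg_cond_subset_QSym_even[OF assms]
    by (rule Pi_plus_eqI)
  then show "module.span scl (Mqs ` {\<alpha>. is_comp \<alpha> \<and> comp_even \<alpha>}) = (Pi_plus :: 'a qsym set)"
    by (simp add: span_Mqs_even)
  show "\<not> module.dependent scl (Mqs ` {\<alpha>. is_comp \<alpha> \<and> comp_even \<alpha>} :: 'a qsym set)"
    unfolding Mqs_eq_point_fun by (rule independent_point_funs)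
qed

end
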